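(* For all integers $n\ge 1$, $k\ge 0$ and $c\ge k$ with $c\ge1$, $$\left\langle {n \atop k}\right\rangle_{\!c}=\left\langle {n \atop k}\right\rangle_{\!k}$$ (for $k=0$ both sides equal $1$, the right side being read as $\left\langle {n \atop 0}\right\rangle_{\!0}=1$).
   Context: A $c$-rook placement on an $n\times n$ board is a placement of $cn$ rooks on the cells, several rooks being allowed in the same cell, such that every row and every column contains exactly $c$ rooks (equivalently, an $n\times n$ matrix of nonnegative integers with all row and column sums equal to $c$). A drop is a rook lying strictly below the main diagonal, i.e.\ in a cell $(i,j)$ (row $i$, column $j$) with $i>j$, counted with multiplicity. The generalized Eulerian number $\left\langle {n \atop k}\right\rangle_{\!c}$ is the number of $c$-rook placements on the $n\times n$ board with exactly $k$ drops. *)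

theory Defs
  imports Main
begin

text \<open>A c-rook placement on the n x n board is an n x n matrix of natural numbers
(rows/columns indexed by 0..n-1; entries outside the board are 0) with all
row and column sums equal to c.\<close>

definition rook_placements :: "nat \<Rightarrow> nat \<Rightarrow> (nat \<Rightarrow> nat \<Rightarrow> nat) set" where
  "rook_placements n c =
     {A. (\<forall>i j. (n \<le> i \<or> n \<le> j) \<longrightarrow> A i j = 0)
       \<and> (\<forall>i<n. (\<Sum>j<n. A i j) = c)
       \<and> (\<forall>j<n. (\<Sum>i<n. A i j) = c)}"

definition drops :: "nat \<Rightarrow> (nat \<Rightarrow> nat \<Rightarrow> nat) \<Rightarrow> nat" where
  "drops n A = (\<Sum>i<n. \<Sum>j<i. A i j)"

definition gen_eulerian :: "nat \<Rightarrow> nat \<Rightarrow> nat \<Rightarrow> nat" where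
  "gen_eulerian n k c = card {A \<in> rook_placements n c. drops n A = k}"

end

theory Submission
  imports Defs
begin

text \<open>Adding the identity matrix to a \<open>c\<close>-rook placement gives a \<open>(c+1)\<close>-rook placement
with the same drops, and this map is injective. It is onto the \<open>(c+1)\<close>-placements with at
most \<open>c\<close> drops: in such a placement the first \<open>i+1\<close> columns hold \<open>(i+1)(c+1)\<close> rooks, of which
the first \<open>i\<close> rows hold at most \<open>i(c+1)\<close>; the remaining ones sit at \<open>(i,i)\<close> or are drops,
so cell \<open>(i,i)\<close> is occupied.\<close>

definition plus_id :: "nat \<Rightarrow> (nat \<Rightarrow> nat \<Rightarrow> nat) \<Rightarrow> nat \<Rightarrow> nat \<Rightarrow> nat" where
  "plus_id n A = (\<lambda>i j. A i j + (if i = j \<and> i < n then 1 else 0))"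

definition minus_id :: "nat \<Rightarrow> (nat \<Rightarrow> nat \<Rightarrow> nat) \<Rightarrow> nat \<Rightarrow> nat \<Rightarrow> nat" where
  "minus_id n A = (\<lambda>i j. A i j - (if i = j \<and> i < n then 1 else 0))"

lemma row_sum_plus_id: "i < n \<Longrightarrow> (\<Sum>j<n. plus_id n A i j) = (\<Sum>j<n. A i j) + 1"
  by (simp add: plus_id_def sum.distrib)

lemma col_sum_plus_id: "j < n \<Longrightarrow> (\<Sum>i<n. plus_id n A i j) = (\<Sum>i<n. A i j) + 1"
  by (simp add: plus_id_def sum.distrib)

lemma drops_plus_id: "drops n (plus_id n A) = drops n A"
  unfolding drops_def plus_id_def by (intro sum.cong refl) auto

lemma inj_plus_id: "inj (plus_id n)"
  by (rule injI) (auto simp: plus_id_def fun_eq_iff)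

lemma plus_id_minus_id:
  assumes "\<And>i. i < n \<Longrightarrow> 1 \<le> B i i"
  shows "plus_id n (minus_id n B) = B"
  using assms by (auto simp: plus_id_def minus_id_def fun_eq_iff)

lemma plus_id_in_rook_placements_iff:
  "plus_id n A \<in> rook_placements n (Suc c) \<longleftrightarrow> A \<in> rook_placements n c"
  unfolding rook_placements_def
  by (auto simp: row_sum_plus_id col_sum_plus_id) (auto simp: plus_id_def)

lemma upper_block_sum_le:
  assumes "A \<in> rook_placements n c" and "i < n"
  shows "(\<Sum>r<i. \<Sum>j\<le>i. A r j) \<le> i * c"
proof -
  have "(\<Sum>r<i. \<Sum>j\<le>i. A r j) \<le> (\<Sum>r<i. \<Sum>j<n. A r j)"
    using assms(2) by (intro sum_mono sum_mono2) auto
  also have "\<dots> = (\<Sum>r<i. c)"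
    using assms by (intro sum.cong) (auto simp: rook_placements_def)
  finally show ?thesis by simp
qed

lemma lower_block_sum_le: "(\<Sum>r\<in>{i..<n}. \<Sum>j\<le>i. A r j) \<le> A i i + drops n A"
proof -
  have "(\<Sum>r\<in>{i..<n}. \<Sum>j\<le>i. A r j) \<le> (\<Sum>r\<in>{i..<n}. (if r = i then A i i else 0) + (\<Sum>j<r. A r j))"
  proof (rule sum_mono)
    fix r assume r: "r \<in> {i..<n}"
    show "(\<Sum>j\<le>i. A r j) \<le> (if r = i then A i i else 0) + (\<Sum>j<r. A r j)"
    proof (cases "r = i")
      case True
      then show ?thesis by (simp add: lessThan_Suc_atMost[symmetric])
    next
      case False
      with r have "{..i} \<subseteq> {..<r}" by auto
      with False show ?thesis by (simp add: sum_mono2)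
    qed
  qed
  also have "\<dots> \<le> A i i + (\<Sum>r\<in>{i..<n}. \<Sum>j<r. A r j)"
    by (simp add: sum.distrib)
  also have "(\<Sum>r\<in>{i..<n}. \<Sum>j<r. A r j) \<le> drops n A"
    unfolding drops_def by (rule sum_mono2) auto
  finally show ?thesis by simp
qed

lemma le_diag_plus_drops:
  assumes A: "A \<in> rook_placements n c" and i: "i < n"
  shows "c \<le> A i i + drops n A"
proof -
  have "Suc i * c = (\<Sum>j\<le>i. \<Sum>r<n. A r j)"
    using A i by (simp add: rook_placements_def)
  also have "\<dots> = (\<Sum>r<n. \<Sum>j\<le>i. A r j)"
    by (rule sum.swap)
  also have "\<dots> = (\<Sum>r<i. \<Sum>j\<le>i. A r j) + (\<Sum>r\<in>{i..<n}. \<Sum>j\<le>i. A r j)"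
    using i by (simp add: sum.atLeastLessThan_concat[of 0 i n, symmetric] lessThan_atLeast0)
  also have "\<dots> \<le> i * c + (A i i + drops n A)"
    using upper_block_sum_le[OF A i] lower_block_sum_le by (rule add_mono)
  finally show ?thesis by simp
qed

lemma rook_placements_Suc_eq_plus_id:
  assumes B: "B \<in> rook_placements n (Suc c)" and "drops n B \<le> c"
  shows "plus_id n (minus_id n B) = B" and "minus_id n B \<in> rook_placements n c"
proof -
  have "\<And>i. i < n \<Longrightarrow> 1 \<le> B i i"
    using le_diag_plus_drops[OF B] assms(2) by fastforce
  then show eq: "plus_id n (minus_id n B) = B"
    by (rule plus_id_minus_id)
  from B have "plus_id n (minus_id n B) \<in> rook_placements n (Suc c)"
    by (simp only: eq)
  then show "minus_id n B \<in> rook_placements n c"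
    by (simp only: plus_id_in_rook_placements_iff)
qed

lemma gen_eulerian_Suc:
  assumes "k \<le> c"
  shows "gen_eulerian n k (Suc c) = gen_eulerian n k c"
proof -
  let ?P = "\<lambda>c. {A \<in> rook_placements n c. drops n A = k}"
  have "plus_id n ` ?P c = ?P (Suc c)"
  proof
    show "plus_id n ` ?P c \<subseteq> ?P (Suc c)"
      using plus_id_in_rook_placements_iff drops_plus_id by blast
    show "?P (Suc c) \<subseteq> plus_id n ` ?P c"
    proof
      fix B assume B: "B \<in> ?P (Suc c)"
      then have "drops n B \<le> c" using assms by simp
      with B have eq: "plus_id n (minus_id n B) = B" and "minus_id n B \<in> rook_placements n c"
        using rook_placements_Suc_eq_plus_id by blast+
      moreover have "drops n (minus_id n B) = k"
        using B drops_plus_id[of n "minus_id n B"] by (simp add: eq)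
      ultimately show "B \<in> plus_id n ` ?P c" by (intro image_eqI[of B _ "minus_id n B"]) simp_all
    qed
  qed
  moreover have "inj_on (plus_id n) (?P c)"
    using inj_plus_id by (rule inj_on_subset) simp
  ultimately show ?thesis
    unfolding gen_eulerian_def by (simp add: card_image[symmetric])
qed

theorem lemma5p1:
  fixes n k c :: nat
  assumes "n \<ge> 1" and "c \<ge> k" and "c \<ge> 1"
  shows "gen_eulerian n k c = gen_eulerian n k k"
proof -
  have "gen_eulerian n k (k + d) = gen_eulerian n k k" for d
    by (induction d) (simp_all add: gen_eulerian_Suc)
  from this[of "c - k"] assms(2) show ?thesis by simp
qed

end
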